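(* (Failure of logical omniscience.) There exist a Hintikka tree $H$ and sentences $\varphi_1, \varphi_2$ of $L$ that are logically equivalent but satisfy $B(\varphi_1) \neq B(\varphi_2)$, where $B$ is the belief induced by $H$.
   Context: $L$ is a first-order language without equality with finitely many predicate symbols and no function or constant symbols. For $d \in \mathbb{N}$, $\Delta^{(d)}$ is the finite set of Hintikka constituents of depth $d$ with no free variables ($\Delta^{(0)} = \{\top\}$); every sentence $\varphi$ of quantifier depth $d$ is logically equivalent to the disjunction of a set $\mathrm{dnf}(\varphi) \subseteq \Delta^{(d)}$ (its Hintikka distributive normal form of depth $d$). $\mathrm{expand}(1,\delta^{(d)})\subseteq\Delta^{(d+1)}$ denotes the expansions of $\delta^{(d)}$. Refinement tree: on $\Delta = \bigcup_d \Delta^{(d)}$ put an edge from each $\delta^{(d)}$ to each member of $\mathrm{expand}(1,\delta^{(d)})$, keeping a constituent lying in several depth-$d$ expansions as child of only one of them. A Hintikka tree is a function $H: \Delta \to [0,1]$ with $H(\delta^{(0)}) = 1$ and $H(\delta) = \sum_{\delta' \text{ child of } \delta} H(\delta')$ for all $\delta$. Let $\Psi^\omega$ be the set of infinite root paths in the refinement tree with the topology generated by cylinders $[\delta^{(0)}\cdots\delta^{(d)}]$ (paths with that prefix), and $\beta$ the unique Borel probability measure with $\beta([\delta^{(0)}\cdots\delta^{(d)}]) = H(\delta^{(d)})$. The belief in a sentence $\varphi$ of depth $d$ is $B(\varphi) = \sum_{\delta^{(d)} \in \mathrm{dnf}(\varphi)} \beta([\delta^{(0)} \cdots \delta^{(d)}])$,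 where $\delta^{(0)}\cdots\delta^{(d)}$ is the root path to $\delta^{(d)}$. *)

theory Defs
  imports Complex_Main "HOL-Library.FSet"
begin

text \<open>Predicate symbols are the elements of a finite type 'p, with an arity function.
  Variables are natural numbers.  The other connectives and the universal
  quantifier are the usual abbreviations.\<close>

datatype 'p fm = Atom 'p "nat list" | Neg "'p fm" | Conj "'p fm" "'p fm" | Ex nat "'p fm"

fun wf_fm :: "('p \<Rightarrow> nat) \<Rightarrow> 'p fm \<Rightarrow> bool" where
  "wf_fm ar (Atom p vs) = (length vs = ar p)"
| "wf_fm ar (Neg f) = wf_fm ar f"
| "wf_fm ar (Conj f g) = (wf_fm ar f \<and> wf_fm ar g)"
| "wf_fm ar (Ex x f) = wf_fm ar f"

fun fv :: "'p fm \<Rightarrow> nat set" where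
  "fv (Atom p vs) = set vs"
| "fv (Neg f) = fv f"
| "fv (Conj f g) = fv f \<union> fv g"
| "fv (Ex x f) = fv f - {x}"

fun qdepth :: "'p fm \<Rightarrow> nat" where
  "qdepth (Atom p vs) = 0"
| "qdepth (Neg f) = qdepth f"
| "qdepth (Conj f g) = max (qdepth f) (qdepth g)"
| "qdepth (Ex x f) = Suc (qdepth f)"

definition sentence :: "('p \<Rightarrow> nat) \<Rightarrow> 'p fm \<Rightarrow> bool" where
  "sentence ar f \<longleftrightarrow> wf_fm ar f \<and> fv f = {}"

text \<open>Tarski semantics. Structures have a nonempty domain D (a set of naturals; by
  downward Loewenheim-Skolem this suffices for logical equivalence).\<close>

fun sat :: "nat set \<Rightarrow> ('p \<Rightarrow> nat list \<Rightarrow> bool) \<Rightarrow> (nat \<Rightarrow> nat) \<Rightarrow> 'p fm \<Rightarrow> bool" where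
  "sat D I e (Atom p vs) = I p (map e vs)"
| "sat D I e (Neg f) = (\<not> sat D I e f)"
| "sat D I e (Conj f g) = (sat D I e f \<and> sat D I e g)"
| "sat D I e (Ex x f) = (\<exists>a\<in>D. sat D I (e(x := a)) f)"

definition log_equiv :: "'p fm \<Rightarrow> 'p fm \<Rightarrow> bool" where
  "log_equiv f g \<longleftrightarrow>
     (\<forall>D I e. D \<noteq> {} \<longrightarrow> (\<forall>x. e x \<in> D) \<longrightarrow> (sat D I e f \<longleftrightarrow> sat D I e g))"

text \<open>An (attributive) constituent with k free variables (positions 0..k-1) is represented
  by its tree structure: Cst A G stands for
    (conjunction of the atoms in the variables 0..k-1 that contain variable k-1,
     positive exactly for those in A)
    \<and> (\<And>\<gamma>\<in>G. \<exists>x_k. \<gamma>) \<and> \<forall>x_k. \<Or>\<gamma>\<in>G. \<gamma>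
  where G is a set of constituents with k+1 free variables and one less depth.\<close>

datatype 'p cst = Cst "('p \<times> nat list) fset" "'p cst fset"

fun cst_atoms :: "'p cst \<Rightarrow> ('p \<times> nat list) fset" where
  "cst_atoms (Cst A G) = A"

fun cst_children :: "'p cst \<Rightarrow> 'p cst fset" where
  "cst_children (Cst A G) = G"

definition new_atoms :: "('p \<Rightarrow> nat) \<Rightarrow> nat \<Rightarrow> ('p \<times> nat list) set" where
  "new_atoms ar k = {(p, vs). 0 < k \<and> length vs = ar p \<and> set vs \<subseteq> {..<k} \<and> k - 1 \<in> set vs}"

text \<open>Gam ar d k: constituents of depth d with k free variables.\<close>
fun Gam :: "('p \<Rightarrow> nat) \<Rightarrow> nat \<Rightarrow> nat \<Rightarrow> 'p cst set" where
  "Gam ar 0 k = {Cst A {||} | A. fset A \<subseteq> new_atoms ar k}"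
| "Gam ar (Suc d) k = {Cst A G | A G. fset A \<subseteq> new_atoms ar k \<and> fset G \<subseteq> Gam ar d (Suc k)}"

definition Delta :: "('p \<Rightarrow> nat) \<Rightarrow> nat \<Rightarrow> 'p cst set" where
  "Delta ar d = Gam ar d 0"

definition top_cst :: "'p cst" where
  "top_cst = Cst {||} {||}"

fun trunc :: "nat \<Rightarrow> 'p cst \<Rightarrow> 'p cst" where
  "trunc 0 (Cst A G) = Cst A {||}"
| "trunc (Suc n) (Cst A G) = Cst A (fimage (trunc n) G)"

text \<open>Each constituent has a unique reduct, hence lies in exactly one such set, so these are
  exactly the children of delta in the refinement tree.\<close>
definition expand1 :: "('p \<Rightarrow> nat) \<Rightarrow> nat \<Rightarrow> 'p cst \<Rightarrow> 'p cst set" where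
  "expand1 ar d \<delta> = {\<delta>' \<in> Delta ar (Suc d). trunc d \<delta>' = \<delta>}"

text \<open>Evaluation of a formula along a path cs = [c_0,...,c_k] of constituents
  (c_j has j free variables); sigma maps formula variables to variable positions.  This is how Hintikka's expansion procedure
  determines which constituents occur in the normal form.\<close>

fun ev :: "'p cst list \<Rightarrow> (nat \<Rightarrow> nat) \<Rightarrow> 'p fm \<Rightarrow> bool" where
  "ev cs \<sigma> (Atom p vs) = ((p, map \<sigma> vs) |\<in>| cst_atoms (cs ! Suc (Max (set (map \<sigma> vs)))))"
| "ev cs \<sigma> (Neg f) = (\<not> ev cs \<sigma> f)"
| "ev cs \<sigma> (Conj f g) = (ev cs \<sigma> f \<and> ev cs \<sigma> g)"
| "ev cs \<sigma> (Ex x f) = (\<exists>\<gamma>\<in>fset (cst_children (last cs)). ev (cs @ [\<gamma>]) (\<sigma>(x := length cs - 1)) f)"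

definition dnf :: "('p \<Rightarrow> nat) \<Rightarrow> 'p fm \<Rightarrow> 'p cst set" where
  "dnf ar f = {\<delta> \<in> Delta ar (qdepth f). ev [\<delta>] (\<lambda>_. 0) f}"

text \<open>Nodes of the refinement tree are pairs (depth, constituent); H d delta is the
  value at the depth-d constituent delta.\<close>
definition hintikka_tree :: "('p \<Rightarrow> nat) \<Rightarrow> (nat \<Rightarrow> 'p cst \<Rightarrow> real) \<Rightarrow> bool" where
  "hintikka_tree ar H \<longleftrightarrow>
     (\<forall>d. \<forall>\<delta>\<in>Delta ar d. 0 \<le> H d \<delta> \<and> H d \<delta> \<le> 1) \<and>
     H 0 top_cst = 1 \<and>
     (\<forall>d. \<forall>\<delta>\<in>Delta ar d. H d \<delta> = (\<Sum>\<delta>'\<in>expand1 ar d \<delta>. H (Suc d) \<delta>'))"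

text \<open>The belief: beta of the cylinder of the root path to delta is by definition H(delta).\<close>
definition belief :: "('p \<Rightarrow> nat) \<Rightarrow> (nat \<Rightarrow> 'p cst \<Rightarrow> real) \<Rightarrow> 'p fm \<Rightarrow> real" where
  "belief ar H f = (\<Sum>\<delta>\<in>dnf ar f. H (qdepth f) \<delta>)"

end

theory Submission
  imports Defs
begin

text \<open>A Hintikka tree may put all its mass on a path of constituents that is trivially
  inconsistent.  Take the path whose depth-1 constituent says that some individual
  exists, and whose deeper constituents say that the first individual exists but no
  second one does: at depth 2 the list of possible second individuals is empty.  The
  point mass on this path gives \<open>\<exists>x. \<top>\<close> (depth 1) belief 1 but the equivalent
  sentence \<open>\<exists>x. \<exists>x. \<top>\<close> (depth 2) belief 0, because its normal form only inspects
  the depth-2 constituent.\<close>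

lemma finite_new_atoms:
  fixes ar :: "'p::finite \<Rightarrow> nat"
  shows "finite (new_atoms ar k)"
proof -
  let ?m = "Max (range ar)"
  have "new_atoms ar k \<subseteq> UNIV \<times> {vs. set vs \<subseteq> {..<k} \<and> length vs \<le> ?m}"
    unfolding new_atoms_def by auto
  moreover have "finite ((UNIV::'p set) \<times> {vs. set vs \<subseteq> {..<k} \<and> length vs \<le> ?m})"
    using finite_lists_length_le[of "{..<k}" ?m] by simp
  ultimately show ?thesis
    by (rule finite_subset)
qed

lemma finite_fsets_subset:
  assumes "finite N"
  shows "finite {A. fset A \<subseteq> N}"
proof (rule finite_imageD)
  show "finite (fset ` {A. fset A \<subseteq> N})"
    using assms by (blast intro: finite_subset[of _ "Pow N"])
  show "inj_on fset {A. fset A \<subseteq> N}"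
    by (simp add: inj_on_def fset_inject)
qed

lemma finite_Gam:
  fixes ar :: "'p::finite \<Rightarrow> nat"
  shows "finite (Gam ar d k)"
proof (induction d arbitrary: k)
  case 0
  have "Gam ar 0 k = (\<lambda>A. Cst A {||}) ` {A. fset A \<subseteq> new_atoms ar k}"
    by auto
  then show ?case
    using finite_fsets_subset[OF finite_new_atoms[of ar k]] by simp
next
  case (Suc d)
  have "Gam ar (Suc d) k = case_prod Cst `
      ({A. fset A \<subseteq> new_atoms ar k} \<times> {G. fset G \<subseteq> Gam ar d (Suc k)})"
    by auto
  then show ?case
    using finite_fsets_subset[OF finite_new_atoms[of ar k]] finite_fsets_subset[OF Suc.IH]
    by simp
qed

lemma finite_Delta: "finite (Delta (ar::'p::finite \<Rightarrow> nat) d)"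
  unfolding Delta_def by (rule finite_Gam)

lemma finite_expand1: "finite (expand1 (ar::'p::finite \<Rightarrow> nat) d \<delta>)"
  unfolding expand1_def using finite_Delta[of ar "Suc d"] by simp

lemma finite_dnf: "finite (dnf (ar::'p::finite \<Rightarrow> nat) f)"
  unfolding dnf_def using finite_Delta[of ar "qdepth f"] by simp

definition point_mass :: "(nat \<Rightarrow> 'p cst) \<Rightarrow> nat \<Rightarrow> 'p cst \<Rightarrow> real" where
  "point_mass \<pi> d \<delta> = (if \<delta> = \<pi> d then 1 else 0)"

definition root_path :: "('p \<Rightarrow> nat) \<Rightarrow> (nat \<Rightarrow> 'p cst) \<Rightarrow> bool" where
  "root_path ar \<pi> \<longleftrightarrow> \<pi> 0 = top_cst \<and> (\<forall>d. \<pi> d \<in> Delta ar d \<and> trunc d (\<pi> (Suc d)) = \<pi> d)"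

lemma hintikka_tree_point_mass:
  fixes ar :: "'p::finite \<Rightarrow> nat"
  assumes "root_path ar \<pi>"
  shows "hintikka_tree ar (point_mass \<pi>)"
  unfolding hintikka_tree_def
proof (intro conjI allI ballI)
  show "point_mass \<pi> 0 top_cst = 1"
    using assms by (simp add: root_path_def point_mass_def)
next
  fix d \<delta>
  have "\<pi> (Suc d) \<in> expand1 ar d \<delta> \<longleftrightarrow> \<delta> = \<pi> d"
    using assms by (auto simp: root_path_def expand1_def)
  then show "point_mass \<pi> d \<delta> = (\<Sum>\<delta>'\<in>expand1 ar d \<delta>. point_mass \<pi> (Suc d) \<delta>')"
    by (simp add: point_mass_def sum.delta[OF finite_expand1])
qed (simp_all add: point_mass_def)

lemma belief_point_mass:
  fixes ar :: "'p::finite \<Rightarrow> nat"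
  shows "belief ar (point_mass \<pi>) f = (if \<pi> (qdepth f) \<in> dnf ar f then 1 else 0)"
  unfolding belief_def point_mass_def by (simp add: sum.delta[OF finite_dnf])

definition lonely_path :: "nat \<Rightarrow> 'p cst" where
  "lonely_path d = (if d = 0 then top_cst else Cst {||} {|Cst {||} {||}|})"

lemma Cst_empty_in_Gam: "Cst {||} {||} \<in> Gam ar d k"
  by (cases d) auto

lemma trunc_Cst_empty: "trunc n (Cst {||} {||}) = Cst {||} {||}"
  by (cases n) auto

lemma lonely_path_in_Delta: "lonely_path d \<in> Delta ar d"
  by (cases d) (auto simp: lonely_path_def Delta_def top_cst_def intro: Cst_empty_in_Gam)

lemma root_path_lonely_path: "root_path ar lonely_path"
  unfolding root_path_def
proof (intro conjI allI)
  fix d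
  show "lonely_path d \<in> Delta ar d"
    by (rule lonely_path_in_Delta)
  show "trunc d (lonely_path (Suc d)) = lonely_path d"
    by (cases d) (auto simp: lonely_path_def top_cst_def trunc_Cst_empty)
qed (simp add: lonely_path_def)

definition taut :: "'p fm \<Rightarrow> 'p fm" where
  "taut a = Neg (Conj a (Neg a))"

lemma qdepth_taut [simp]: "qdepth (taut a) = qdepth a"
  by (simp add: taut_def)

lemma ev_taut [simp]: "ev cs \<sigma> (taut a)"
  by (simp add: taut_def)

definition diag_atom :: "('p \<Rightarrow> nat) \<Rightarrow> 'p \<Rightarrow> 'p fm" where
  "diag_atom ar q = Atom q (replicate (ar q) 0)"

lemma sentence_Ex_taut_diag_atom:
  assumes "0 < ar q"
  shows "sentence ar (Ex 0 (taut (diag_atom ar q)))"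
  using assms by (simp add: sentence_def taut_def diag_atom_def)

lemma log_equiv_Ex_Ex_same_var: "log_equiv (Ex x f) (Ex x (Ex x f))"
  by (auto simp: log_equiv_def)

theorem mainTheorem5:
  fixes arity :: "'p::finite \<Rightarrow> nat"
  assumes "\<forall>p. 0 < arity p"
  shows "\<exists>H \<phi>1 \<phi>2. hintikka_tree arity H \<and> sentence arity \<phi>1 \<and> sentence arity \<phi>2 \<and>
           log_equiv \<phi>1 \<phi>2 \<and> belief arity H \<phi>1 \<noteq> belief arity H \<phi>2"
proof -
  define \<phi> where "\<phi> = Ex 0 (taut (diag_atom arity undefined))"
  have "sentence arity \<phi>"
    unfolding \<phi>_def using assms by (intro sentence_Ex_taut_diag_atom) simp
  moreover from this have "sentence arity (Ex 0 \<phi>)"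
    by (simp add: sentence_def)
  moreover have "belief arity (point_mass lonely_path) \<phi> = 1"
    using lonely_path_in_Delta[of 1 arity]
    by (simp add: belief_point_mass dnf_def \<phi>_def diag_atom_def lonely_path_def)
  moreover have "belief arity (point_mass lonely_path) (Ex 0 \<phi>) = 0"
    by (simp add: belief_point_mass dnf_def \<phi>_def lonely_path_def)
  ultimately show ?thesis
    using hintikka_tree_point_mass[OF root_path_lonely_path]
      log_equiv_Ex_Ex_same_var[of 0 "taut (diag_atom arity undefined)"]
    unfolding \<phi>_def by fastforce
qed

end
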